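(* Assume that the success probabilities $Q_a$, $a\in\mathcal{A}$, are pairwise distinct. Then there exists an optimal threshold-type age-dependent policy $\phi^*$ of the MDP $\Lambda$ whose action order $(b_1,\dots,b_K)$ satisfies, for every $1\le k<K$, $$b_{k+1}\in\arg\min_{a\in\mathcal{A}:\,Q_a>Q_{b_k}}\ \gamma_{b_k,a},\qquad \gamma_{b_k,a}=\frac{E_a-E_{b_k}}{Q_a-Q_{b_k}}.$$
   Context: Fix $N\in\mathbb{N}^+$ vehicle types $\mathcal{N}=\{1,\dots,N\}$ with arrival probabilities $p_n\in(0,1]$, mean operational costs $c_n\ge0$ and mean sensing capabilities $r_n\in(0,1]$. Fix $\beta\in(0,1)$, $\epsilon>0$. Actions: $\mathcal{A}=2^{\mathcal{N}}$. Success probability $Q_\emptyset=0$, $Q_a=1-\prod_{n\in a}(1-r_np_n)$; expected recruitment cost $E_a=\sum_{n\in a}p_nc_n$. The marginal cost-effectiveness of changing from action $a_i$ to $a_j$ (with $Q_{a_j}\ne Q_{a_i}$) is $\gamma_{a_i,a_j}=(E_{a_j}-E_{a_i})/(Q_{a_j}-Q_{a_i})$. Immediate cost at state $\delta\in\mathbb{N}^+$: $u(\delta,a)=(1-\beta)E_a-\beta\epsilon\big(Q_a(\delta^2+2\delta)-(1+\delta)^2\big)$. MDP $\Lambda$: states $\mathbb{N}^+$; from state $s$ under action $a$ move to $1$ w.p. $Q_a$ and to $s+1$ w.p. $1-Q_a$; average cost $V(\phi)=\limsup_{T\to\infty}\frac1T\mathbb{E}^\phi[\sum_{t=1}^Tu(S(t),A(t))]$,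 $S(1)=1$, to be minimized. A threshold-type age-dependent policy is a deterministic stationary policy $\phi:\mathbb{N}^+\to\mathcal{A}$ for which there are $K\in\mathbb{N}^+$, an action order $(b_1,\dots,b_K)$ with $b_k\ne b_{k+1}$, and integer thresholds $1\le\theta_{b_1\to b_2}\le\dots\le\theta_{b_{K-1}\to b_K}$ such that $\phi(s)=b_k$ for $\theta_{b_{k-1}\to b_k}\le s<\theta_{b_k\to b_{k+1}}$ (conventions $\theta_{b_0\to b_1}=1$, $\theta_{b_K\to b_{K+1}}=\infty$). *)

theory Defs
  imports "HOL-Probability.Probability"
begin

text \<open>Vehicle types are 1..N; actions are subsets of {1..N}.\<close>

definition actions :: "nat \<Rightarrow> nat set set" where
  "actions N = Pow {1..N}"

definition succ_prob :: "(nat \<Rightarrow> real) \<Rightarrow> (nat \<Rightarrow> real) \<Rightarrow> nat set \<Rightarrow> real" where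
  "succ_prob p r a = 1 - (\<Prod>n\<in>a. 1 - r n * p n)"

definition exp_cost :: "(nat \<Rightarrow> real) \<Rightarrow> (nat \<Rightarrow> real) \<Rightarrow> nat set \<Rightarrow> real" where
  "exp_cost p c a = (\<Sum>n\<in>a. p n * c n)"

definition gamma :: "(nat \<Rightarrow> real) \<Rightarrow> (nat \<Rightarrow> real) \<Rightarrow> (nat \<Rightarrow> real)
    \<Rightarrow> nat set \<Rightarrow> nat set \<Rightarrow> real" where
  "gamma p c r ai aj =
     (exp_cost p c aj - exp_cost p c ai) / (succ_prob p r aj - succ_prob p r ai)"

definition imm_cost :: "(nat \<Rightarrow> real) \<Rightarrow> (nat \<Rightarrow> real) \<Rightarrow> (nat \<Rightarrow> real) \<Rightarrow> real \<Rightarrow> real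
    \<Rightarrow> nat \<Rightarrow> nat set \<Rightarrow> real" where
  "imm_cost p c r \<beta> \<epsilon> \<delta> a =
     (1 - \<beta>) * exp_cost p c a
     - \<beta> * \<epsilon> * (succ_prob p r a * (real \<delta> ^ 2 + 2 * real \<delta>) - (1 + real \<delta>) ^ 2)"

text \<open>General (history-dependent, randomized) policies: given the history of past
  (state, action) pairs and the current state, a distribution over actions.\<close>
type_synonym policy = "(nat \<times> nat set) list \<Rightarrow> nat \<Rightarrow> nat set pmf"

definition admissible_policy :: "nat \<Rightarrow> policy \<Rightarrow> bool" where
  "admissible_policy N \<psi> \<longleftrightarrow> (\<forall>h s. set_pmf (\<psi> h s) \<subseteq> actions N)"

definition det_policy :: "(nat \<Rightarrow> nat set) \<Rightarrow> policy" where
  "det_policy \<phi> = (\<lambda>h s. return_pmf (\<phi> s))"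

definition transition :: "(nat \<Rightarrow> real) \<Rightarrow> (nat \<Rightarrow> real) \<Rightarrow> nat \<Rightarrow> nat set \<Rightarrow> nat pmf" where
  "transition p r s a =
     map_pmf (\<lambda>b. if b then 1 else s + 1) (bernoulli_pmf (succ_prob p r a))"

text \<open>Distribution of (history, current state) at time t+1; S(1) = 1.\<close>
primrec hist_dist :: "(nat \<Rightarrow> real) \<Rightarrow> (nat \<Rightarrow> real) \<Rightarrow> policy \<Rightarrow> nat
    \<Rightarrow> ((nat \<times> nat set) list \<times> nat) pmf" where
  "hist_dist p r \<psi> 0 = return_pmf ([], 1)"
| "hist_dist p r \<psi> (Suc t) =
     bind_pmf (hist_dist p r \<psi> t) (\<lambda>(h, s).
       bind_pmf (\<psi> h s) (\<lambda>a.
         map_pmf (\<lambda>s'. (h @ [(s, a)], s')) (transition p r s a)))"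

text \<open>Joint distribution of (S(t), A(t)) for t = 1, 2, ...\<close>
definition state_action_dist :: "(nat \<Rightarrow> real) \<Rightarrow> (nat \<Rightarrow> real) \<Rightarrow> policy \<Rightarrow> nat
    \<Rightarrow> (nat \<times> nat set) pmf" where
  "state_action_dist p r \<psi> t =
     bind_pmf (hist_dist p r \<psi> (t - 1)) (\<lambda>(h, s). map_pmf (\<lambda>a. (s, a)) (\<psi> h s))"

definition avg_cost :: "(nat \<Rightarrow> real) \<Rightarrow> (nat \<Rightarrow> real) \<Rightarrow> (nat \<Rightarrow> real) \<Rightarrow> real \<Rightarrow> real
    \<Rightarrow> policy \<Rightarrow> ereal" where
  "avg_cost p c r \<beta> \<epsilon> \<psi> =
     limsup (\<lambda>T. ereal ((1 / real T) * (\<Sum>t=1..T.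
        measure_pmf.expectation (state_action_dist p r \<psi> t)
          (\<lambda>(s, a). imm_cost p c r \<beta> \<epsilon> s a))))"

definition optimal_policy :: "nat \<Rightarrow> (nat \<Rightarrow> real) \<Rightarrow> (nat \<Rightarrow> real) \<Rightarrow> (nat \<Rightarrow> real)
    \<Rightarrow> real \<Rightarrow> real \<Rightarrow> policy \<Rightarrow> bool" where
  "optimal_policy N p c r \<beta> \<epsilon> \<psi> \<longleftrightarrow> admissible_policy N \<psi> \<and>
     (\<forall>\<psi>'. admissible_policy N \<psi>' \<longrightarrow> avg_cost p c r \<beta> \<epsilon> \<psi> \<le> avg_cost p c r \<beta> \<epsilon> \<psi>')"

text \<open>Threshold-type age-dependent policy with action order b 1, ..., b K and
  thresholds th k = theta_{b_k -> b_{k+1}} (k = 1..K-1), th 0 = 1 by convention,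
  and theta_{b_K -> b_{K+1}} = infinity.\<close>
definition threshold_policy :: "nat \<Rightarrow> (nat \<Rightarrow> nat set) \<Rightarrow> nat \<Rightarrow> (nat \<Rightarrow> nat set)
    \<Rightarrow> (nat \<Rightarrow> nat) \<Rightarrow> bool" where
  "threshold_policy N \<phi> K b th \<longleftrightarrow>
     K \<ge> 1 \<and>
     (\<forall>k\<in>{1..K}. b k \<in> actions N) \<and>
     (\<forall>k. 1 \<le> k \<and> k < K \<longrightarrow> b k \<noteq> b (Suc k)) \<and>
     th 0 = 1 \<and>
     (\<forall>k. 1 \<le> k \<and> k < K \<longrightarrow> th (k - 1) \<le> th k) \<and>
     (\<forall>s k. 1 \<le> s \<longrightarrow> 1 \<le> k \<longrightarrow> k \<le> K \<longrightarrow> th (k - 1) \<le> s \<longrightarrow> (k = K \<or> s < th k)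
        \<longrightarrow> \<phi> s = b k)"

end

theory Submission
  imports Defs
begin

(* With w the cost of a failed update, the one-step problem
   min_a (1 - beta) E_a + (1 - Q_a) w is solved by actions whose success probability
   grows with w.  The average-cost optimality equation
     g + h s = min_a (u s a + Q_a h 1 + (1 - Q_a) h (s + 1)),   h 1 = 0,
   is solved explicitly: beyond some age the action of largest Q_a is optimal and h is a
   quadratic, below it h is computed backwards, and g is fixed by the intermediate value
   theorem.  Then h is nondecreasing, so the failure cost W s = beta eps (s^2 + 2 s) + h (s + 1)
   is nondecreasing and the greedy policy s |-> choice (W s) is of threshold type.
   Telescoping the equation along the state-action distributions shows that this policy
   attains g, and, since h >= 0 grows at most quadratically, that no admissible policy has
   a smaller average cost.  The action order lists the choices for all w >= W 1 by success
   probability; as w grows, the choice moves from b to an upgrade a of least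
   gamma_{b,a}, because at w = (1 - beta) min_a gamma_{b,a} both b and a are optimal. *)

section \<open>A parametric one-step choice\<close>

text \<open>The parameter \<open>w\<close> is the cost of a failure.  In the MDP, \<open>min_value\<close> is the
  minimisation in the Bellman equation, and \<open>choice\<close> breaks ties towards larger success
  probability, which makes it monotone in \<open>w\<close>.\<close>

locale parametric_choice =
  fixes A :: "'a set" and Q C :: "'a \<Rightarrow> real"
  assumes finite_A: "finite A" and A_nonempty: "A \<noteq> {}"
    and Q_range: "\<And>a. a \<in> A \<Longrightarrow> 0 \<le> Q a \<and> Q a \<le> 1"
    and inj_Q: "inj_on Q A"
begin

definition objective :: "real \<Rightarrow> 'a \<Rightarrow> real" where
  "objective w a = C a + (1 - Q a) * w"

definition minimizers :: "real \<Rightarrow> 'a set" where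
  "minimizers w = {a \<in> A. \<forall>b\<in>A. objective w a \<le> objective w b}"

definition choice :: "real \<Rightarrow> 'a" where
  "choice w = arg_min_on (\<lambda>a. - Q a) (minimizers w)"

definition min_value :: "real \<Rightarrow> real" where
  "min_value w = objective w (choice w)"

definition slope :: "'a \<Rightarrow> 'a \<Rightarrow> real" where
  "slope b a = (C a - C b) / (Q a - Q b)"

lemma minimizers_nonempty: "minimizers w \<noteq> {}"
proof -
  have "arg_min_on (objective w) A \<in> minimizers w"
    using arg_min_least[OF finite_A A_nonempty] arg_min_if_finite(1)[OF finite_A A_nonempty]
    by (auto simp: minimizers_def)
  then show ?thesis by blast
qed

lemma choice_in_minimizers: "choice w \<in> minimizers w"
  and Q_le_Q_choice: "b \<in> minimizers w \<Longrightarrow> Q b \<le> Q (choice w)"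
proof -
  have fin: "finite (minimizers w)" using finite_A by (simp add: minimizers_def)
  show "choice w \<in> minimizers w"
    unfolding choice_def by (rule arg_min_if_finite(1)[OF fin minimizers_nonempty])
  show "Q b \<le> Q (choice w)" if "b \<in> minimizers w"
    using arg_min_least[OF fin minimizers_nonempty that, of "\<lambda>a. - Q a"] by (simp add: choice_def)
qed

lemma choice_in_A: "choice w \<in> A"
  using choice_in_minimizers by (simp add: minimizers_def)

lemma min_value_le: "a \<in> A \<Longrightarrow> min_value w \<le> objective w a"
  using choice_in_minimizers by (simp add: minimizers_def min_value_def)

lemma objective_diff:
  assumes "Q a \<noteq> Q b"
  shows "objective w a - objective w b = (Q a - Q b) * (slope b a - w)"
  using assms by (simp add: objective_def slope_def field_simps)

lemma choice_mono:
  assumes "w \<le> w'"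
  shows "Q (choice w) \<le> Q (choice w')"
proof -
  have "objective w (choice w) \<le> objective w (choice w')"
    and "objective w' (choice w') \<le> objective w' (choice w)"
    using min_value_le[OF choice_in_A] by (simp_all add: min_value_def)
  then have "0 \<le> (Q (choice w') - Q (choice w)) * (w' - w)"
    by (simp add: objective_def algebra_simps)
  then show ?thesis
    using assms by (cases "w = w'") (auto simp: zero_le_mult_iff)
qed

lemma objective_mono: "a \<in> A \<Longrightarrow> w \<le> w' \<Longrightarrow> objective w a \<le> objective w' a"
  using Q_range[of a] by (simp add: objective_def mult_left_mono)

lemma min_value_mono:
  assumes "w \<le> w'"
  shows "min_value w \<le> min_value w'"
proof -
  have "min_value w \<le> objective w (choice w')" by (rule min_value_le[OF choice_in_A])
  also have "\<dots> \<le> objective w' (choice w')" using assms by (rule objective_mono[OF choice_in_A])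
  finally show ?thesis by (simp add: min_value_def)
qed

lemma min_value_lipschitz: "\<bar>min_value w - min_value w'\<bar> \<le> \<bar>w - w'\<bar>"
proof -
  have "min_value w - min_value w' \<le> \<bar>w - w'\<bar>" for w w'
  proof -
    have "min_value w - min_value w' \<le> objective w (choice w') - objective w' (choice w')"
      using min_value_le[OF choice_in_A] by (simp add: min_value_def)
    also have "\<dots> = (1 - Q (choice w')) * (w - w')" by (simp add: objective_def algebra_simps)
    also have "\<dots> \<le> (1 - Q (choice w')) * \<bar>w - w'\<bar>"
      using Q_range[OF choice_in_A, of w'] by (intro mult_left_mono) auto
    also have "\<dots> \<le> \<bar>w - w'\<bar>"
      using Q_range[OF choice_in_A, of w'] by (intro mult_left_le_one_le) auto
    finally show ?thesis .
  qed
  from this[of w w'] this[of w' w] show ?thesis by (simp add: abs_le_iff abs_minus_commute)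
qed

lemma slope_ge_of_minimizer:
  assumes "b \<in> minimizers w" "a \<in> A" "Q b < Q a"
  shows "w \<le> slope b a"
proof -
  have "0 \<le> objective w a - objective w b" using assms(1,2) by (simp add: minimizers_def)
  then show ?thesis using objective_diff[of a b w] assms(3) by (simp add: zero_le_mult_iff)
qed

lemma slope_le_of_minimizer:
  assumes "a \<in> minimizers w" "b \<in> A" "Q b < Q a"
  shows "slope b a \<le> w"
proof -
  have "objective w a - objective w b \<le> 0" using assms(1,2) by (simp add: minimizers_def)
  then show ?thesis using objective_diff[of a b w] assms(3) by (simp add: mult_le_0_iff)
qed

definition top_action :: 'a where
  "top_action = arg_min_on (\<lambda>a. - Q a) A"

lemma top_action_in_A: "top_action \<in> A"
  and Q_le_Q_top_action: "a \<in> A \<Longrightarrow> Q a \<le> Q top_action"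
  unfolding top_action_def
  using arg_min_if_finite(1)[OF finite_A A_nonempty] arg_min_least[OF finite_A A_nonempty, of a "\<lambda>a. - Q a"]
  by simp_all

definition saturation :: real where
  "saturation = Max ((\<lambda>a. slope a top_action) ` A)"

lemma choice_eq_top_action:
  assumes "saturation \<le> w"
  shows "choice w = top_action"
proof -
  have "objective w top_action \<le> objective w a" if a: "a \<in> A" for a
  proof (cases "a = top_action")
    case False
    then have lt: "Q a < Q top_action"
      using Q_le_Q_top_action[OF a] inj_Q a top_action_in_A by (auto simp: inj_on_def order_less_le)
    moreover have "slope a top_action \<le> saturation"
      unfolding saturation_def using finite_A a by (intro Max_ge) auto
    ultimately have "(Q top_action - Q a) * (slope a top_action - w) \<le> 0"
      using assms by (simp add: mult_le_0_iff)
    then show ?thesis using objective_diff[of top_action a w] lt by simp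
  qed simp
  then have "top_action \<in> minimizers w" using top_action_in_A by (simp add: minimizers_def)
  then have "Q top_action \<le> Q (choice w)" by (rule Q_le_Q_choice)
  then have "Q (choice w) = Q top_action" using Q_le_Q_top_action[OF choice_in_A, of w] by simp
  then show ?thesis using inj_Q choice_in_A top_action_in_A by (simp add: inj_on_def)
qed

lemma minimizer_persists:
  assumes b: "b \<in> minimizers w" and "w \<le> v"
    and slopes: "\<And>a. a \<in> A \<Longrightarrow> Q b < Q a \<Longrightarrow> v \<le> slope b a"
  shows "b \<in> minimizers v"
proof -
  have bA: "b \<in> A" using b by (simp add: minimizers_def)
  have "objective v b \<le> objective v a" if a: "a \<in> A" for a
  proof -
    consider "Q b < Q a" | "Q a < Q b" | "Q a = Q b" by linarith
    then show ?thesis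
    proof cases
      case 1
      then have "0 \<le> (Q a - Q b) * (slope b a - v)" using slopes[OF a] by simp
      then show ?thesis using objective_diff[of a b v] 1 by simp
    next
      case 2
      have "objective w b \<le> objective w a" using b a by (simp add: minimizers_def)
      moreover have "0 \<le> (Q b - Q a) * (v - w)" using 2 \<open>w \<le> v\<close> by simp
      ultimately show ?thesis by (simp add: objective_def algebra_simps)
    next
      case 3
      then have "a = b" using inj_Q a bA by (simp add: inj_on_def)
      then show ?thesis by simp
    qed
  qed
  then show ?thesis using bA by (simp add: minimizers_def)
qed

text \<open>At the parameter equal to the least slope \<open>s0\<close> of an upgrade of \<open>choice w\<close>, both
  \<open>choice w\<close> and that upgrade are minimizers, so \<open>choice s0\<close> has already moved up; hence the
  next choice on the ray is reached no later than \<open>s0\<close> and has slope at most \<open>s0\<close>.\<close>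

lemma choice_successor_min_slope:
  assumes w: "w0 \<le> w" and w': "w0 \<le> w'" and up: "Q (choice w) < Q (choice w')"
    and gap: "\<And>v. w0 \<le> v \<Longrightarrow> \<not> (Q (choice w) < Q (choice v) \<and> Q (choice v) < Q (choice w'))"
    and a: "a \<in> A" "Q (choice w) < Q a"
  shows "slope (choice w) (choice w') \<le> slope (choice w) a"
proof -
  define b where "b = choice w"
  define G where "G = {x \<in> A. Q b < Q x}"
  have G: "finite G" "G \<noteq> {}" using finite_A a by (auto simp: G_def b_def)
  define a0 where "a0 = arg_min_on (slope b) G"
  define s0 where "s0 = slope b a0"
  have "a0 \<in> G" unfolding a0_def by (rule arg_min_if_finite(1)[OF G])
  then have a0: "a0 \<in> A" "Q b < Q a0" by (simp_all add: G_def)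
  have s0_min: "s0 \<le> slope b x" if "x \<in> A" "Q b < Q x" for x
    using arg_min_least[OF G, of x "slope b"] that by (simp add: s0_def a0_def G_def)
  have bA: "b \<in> A" by (simp add: b_def choice_in_A)
  have "w \<le> s0"
    unfolding s0_def b_def by (rule slope_ge_of_minimizer[OF choice_in_minimizers a0[unfolded b_def]])
  then have "b \<in> minimizers s0"
    using minimizer_persists[OF choice_in_minimizers] s0_min by (simp add: b_def)
  moreover have "objective s0 a0 = objective s0 b"
    using objective_diff[of a0 b s0] a0 by (simp add: s0_def)
  ultimately have "a0 \<in> minimizers s0" using a0 by (simp add: minimizers_def)
  then have "Q b < Q (choice s0)" using Q_le_Q_choice[of a0 s0] a0(2) by simp
  then have Q_succ: "Q (choice w') \<le> Q (choice s0)"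
    using gap[of s0] w \<open>w \<le> s0\<close> unfolding b_def by linarith
  have "slope b (choice w') \<le> s0"
  proof (rule ccontr)
    assume "\<not> slope b (choice w') \<le> s0"
    moreover have "slope b (choice w') \<le> w'"
      using slope_le_of_minimizer[OF choice_in_minimizers bA] up by (simp add: b_def)
    ultimately have "Q (choice s0) \<le> Q (choice w')" by (intro choice_mono) simp
    then have "choice s0 = choice w'"
      using Q_succ inj_Q choice_in_A by (simp add: inj_on_def)
    then have "slope b (choice w') \<le> s0"
      using slope_le_of_minimizer[OF choice_in_minimizers bA, of s0] up by (simp add: b_def)
    with \<open>\<not> slope b (choice w') \<le> s0\<close> show False by simp
  qed
  also have "s0 \<le> slope b a" using s0_min a by (simp add: b_def)
  finally show ?thesis by (simp add: b_def)
qed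

end


section \<open>Threshold policies from monotone choices\<close>

lemma enumerate_increasing:
  fixes Q :: "'a \<Rightarrow> 'b::linorder"
  assumes "finite S" "S \<noteq> {}" "inj_on Q S"
  obtains K :: nat and b where "1 \<le> K" "b ` {1..K} = S"
    "\<And>j k. j \<in> {1..K} \<Longrightarrow> k \<in> {1..K} \<Longrightarrow> Q (b j) < Q (b k) \<longleftrightarrow> j < k"
proof -
  define xs where "xs = sorted_list_of_set (Q ` S)"
  define b where "b k = the_inv_into S Q (xs ! (k - 1))" for k
  have set_xs: "set xs = Q ` S" and sorted_xs: "sorted_wrt (<) xs"
    using assms(1) by (simp_all add: xs_def)
  have K: "1 \<le> length xs" using set_xs assms(2) by (cases xs) auto
  have b: "b k \<in> S \<and> Q (b k) = xs ! (k - 1)" if "k \<in> {1..length xs}" for k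
  proof -
    have "xs ! (k - 1) \<in> Q ` S" using that set_xs[symmetric] by auto
    then show ?thesis
      unfolding b_def using assms(3) by (auto intro: the_inv_into_into f_the_inv_into_f)
  qed
  have range: "b ` {1..length xs} = S"
  proof (intro equalityI subsetI)
    fix x assume "x \<in> S"
    then obtain i where i: "i < length xs" "xs ! i = Q x" using set_xs by (metis imageI in_set_conv_nth)
    then have "b (Suc i) = x" using b[of "Suc i"] assms(3) \<open>x \<in> S\<close> by (auto simp: inj_on_def)
    then show "x \<in> b ` {1..length xs}" using i by force
  qed (use b in auto)
  have order: "Q (b j) < Q (b k) \<longleftrightarrow> j < k" if "j \<in> {1..length xs}" "k \<in> {1..length xs}" for j k
  proof -
    have "xs ! (j - 1) < xs ! (k - 1)" if "j < k" "j \<in> {1..length xs}" "k \<in> {1..length xs}" for j k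
      using sorted_wrt_nth_less[OF sorted_xs, of "j - 1" "k - 1"] that by auto
    from this[of j k] this[of k j] show ?thesis
      using that b[of j] b[of k] by (cases j k rule: linorder_cases) auto
  qed
  show ?thesis by (rule that[OF K range order])
qed

lemma threshold_policy_of_monotone:
  fixes Q :: "nat set \<Rightarrow> real"
  assumes K: "1 \<le> K" and b_actions: "b ` {1..K} \<subseteq> actions N"
    and b_order: "\<And>j k. j \<in> {1..K} \<Longrightarrow> k \<in> {1..K} \<Longrightarrow> Q (b j) < Q (b k) \<longleftrightarrow> j < k"
    and \<phi>_range: "\<And>s. 1 \<le> s \<Longrightarrow> \<phi> s \<in> b ` {1..K}"
    and \<phi>_mono: "\<And>s t. 1 \<le> s \<Longrightarrow> s \<le> t \<Longrightarrow> Q (\<phi> s) \<le> Q (\<phi> t)"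
    and \<phi>_reaches: "\<And>k. 1 \<le> k \<Longrightarrow> k < K \<Longrightarrow> \<exists>s\<ge>1. Q (b k) < Q (\<phi> s)"
  shows "threshold_policy N \<phi> K b (\<lambda>k. if k = 0 then 1 else LEAST s. 1 \<le> s \<and> Q (b k) < Q (\<phi> s))"
    (is "threshold_policy N \<phi> K b ?th")
proof -
  have th: "1 \<le> ?th k \<and> Q (b k) < Q (\<phi> (?th k))" if "1 \<le> k" "k < K" for k
    using LeastI_ex[OF \<phi>_reaches[OF that]] that by simp
  have th_least: "?th k \<le> s" if "1 \<le> k" "1 \<le> s" "Q (b k) < Q (\<phi> s)" for k s
    using that by (simp add: Least_le)
  show ?thesis
    unfolding threshold_policy_def
  proof (intro conjI allI impI ballI K)
    show "b k \<in> actions N" if "k \<in> {1..K}" for k using b_actions that by auto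
    show "b k \<noteq> b (Suc k)" if "1 \<le> k \<and> k < K" for k using b_order[of k "Suc k"] that by auto
    show "?th (k - 1) \<le> ?th k" if k: "1 \<le> k \<and> k < K" for k
    proof (cases "k = 1")
      case False
      then have "k - 1 \<in> {1..K}" "k \<in> {1..K}" using k by auto
      then have "Q (b (k - 1)) < Q (b k)" using b_order[of "k - 1" k] by simp
      then show ?thesis using th[of k] th_least[of "k - 1" "?th k"] k False by force
    qed (use th[of 1] k in simp)
    fix s k assume s: "1 \<le> s" and k: "1 \<le> k" "k \<le> K" and after: "?th (k - 1) \<le> s"
      and before: "k = K \<or> s < ?th k"
    obtain j where j: "j \<in> {1..K}" "\<phi> s = b j" using \<phi>_range[OF s] by blast
    have "\<not> k < j"
    proof
      assume "k < j"
      then have "Q (b k) < Q (\<phi> s)" using b_order[of k j] j k by simp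
      then show False using before th_least[OF k(1) s] \<open>k < j\<close> j by auto
    qed
    moreover have "\<not> j < k"
    proof
      assume "j < k"
      then have k': "1 \<le> k - 1" "k - 1 < K" using j k by auto
      then have "Q (b (k - 1)) < Q (b j)"
        using th[of "k - 1"] \<phi>_mono[of "?th (k - 1)" s] after j(2) by force
      then have "k - 1 < j" using b_order[of "k - 1" j] j k' by simp
      then show False using \<open>j < k\<close> by simp
    qed
    ultimately show "\<phi> s = b k" using j by simp
  qed simp
qed


section \<open>Long-run averages\<close>

lemma limsup_average_le:
  fixes S :: "nat \<Rightarrow> real"
  assumes "\<And>T. 1 \<le> T \<Longrightarrow> S T \<le> real T * g"
  shows "limsup (\<lambda>T. ereal (1 / real T * S T)) \<le> ereal g"
proof (rule Limsup_bounded)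
  show "\<forall>\<^sub>F T in sequentially. ereal (1 / real T * S T) \<le> ereal g"
    unfolding eventually_sequentially
    using assms by (intro exI[of _ 1]) (auto simp: divide_le_eq mult.commute)
qed

text \<open>If the average of \<open>U\<close> stayed below some \<open>y < g\<close>, the defect \<open>V\<close> would grow linearly,
  hence so would \<open>U\<close>, and then the average of \<open>U\<close> could not stay below \<open>y\<close>.\<close>

lemma limsup_average_ge:
  fixes U V :: "nat \<Rightarrow> real"
  assumes lower: "\<And>T. real T * g - V T \<le> (\<Sum>t=1..T. U t)"
    and growth: "\<And>T. 1 \<le> T \<Longrightarrow> V T \<le> C * U T + D" and C: "0 < C"
  shows "ereal g \<le> limsup (\<lambda>T. ereal (1 / real T * (\<Sum>t=1..T. U t)))"
proof (rule ccontr)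
  define S where "S T = (\<Sum>t=1..T. U t)" for T
  assume "\<not> ereal g \<le> limsup (\<lambda>T. ereal (1 / real T * (\<Sum>t=1..T. U t)))"
  then have "limsup (\<lambda>T. ereal (1 / real T * S T)) < ereal g" by (simp add: S_def not_le)
  then obtain y where y: "limsup (\<lambda>T. ereal (1 / real T * S T)) < ereal y" "ereal y < ereal g"
    using ereal_dense2 by blast
  from y(2) have "y < g" by simp
  have "\<forall>\<^sub>F T in sequentially. ereal (1 / real T * S T) < ereal y" using y(1) by (rule Limsup_lessD)
  then obtain T0 where T0: "\<And>T. T0 \<le> T \<Longrightarrow> 1 / real T * S T < y"
    unfolding eventually_sequentially by auto
  define T1 where "T1 = max (max T0 1) (nat \<lceil>(C * (\<bar>y\<bar> + 1) + D) / (g - y)\<rceil>)"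
  have S_below: "S T < y * real T" if "T1 \<le> T" for T
    using T0[of T] that by (simp add: T1_def divide_less_eq mult.commute)
  have U_large: "\<bar>y\<bar> + 1 \<le> U T" if "T1 \<le> T" for T
  proof -
    have "(C * (\<bar>y\<bar> + 1) + D) / (g - y) \<le> real T" using that unfolding T1_def by linarith
    then have "C * (\<bar>y\<bar> + 1) + D \<le> real T * (g - y)" using \<open>y < g\<close> by (simp add: divide_le_eq mult.commute)
    also have "\<dots> < V T" using lower[of T] S_below[OF that] by (simp add: S_def algebra_simps)
    also have "\<dots> \<le> C * U T + D" using growth that by (simp add: T1_def)
    finally show ?thesis using C by simp
  qed
  have S_grows: "S T1 + real n * (\<bar>y\<bar> + 1) \<le> S (T1 + n)" for n
  proof (induction n)
    case (Suc n)
    then show ?case using U_large[of "Suc (T1 + n)"] by (simp add: S_def algebra_simps)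
  qed simp
  define n where "n = nat \<lceil>y * real T1 - S T1\<rceil>"
  have "S T1 + real n * (\<bar>y\<bar> + 1) < y * real T1 + y * real n"
    using S_grows[of n] S_below[of "T1 + n"] by (simp add: algebra_simps)
  moreover have "y * real n \<le> real n * \<bar>y\<bar>" by (simp add: mult.commute mult_right_mono)
  moreover have "y * real T1 - S T1 \<le> real n" unfolding n_def by linarith
  ultimately show False by (simp add: algebra_simps)
qed


section \<open>Expectations and state-action distributions\<close>

lemma expectation_pmf_cong:
  fixes f g :: "'a \<Rightarrow> real"
  assumes "\<And>x. x \<in> set_pmf M \<Longrightarrow> f x = g x"
  shows "measure_pmf.expectation M f = measure_pmf.expectation M g"
  using assms by (intro integral_cong_AE AE_pmfI) simp_all

lemma expectation_pmf_mono:
  fixes f g :: "'a \<Rightarrow> real"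
  assumes "finite (set_pmf M)" "\<And>x. x \<in> set_pmf M \<Longrightarrow> f x \<le> g x"
  shows "measure_pmf.expectation M f \<le> measure_pmf.expectation M g"
  using assms by (intro integral_mono_AE AE_pmfI integrable_measure_pmf_finite)

lemma expectation_pmf_nonneg:
  fixes f :: "'a \<Rightarrow> real"
  assumes "\<And>x. x \<in> set_pmf M \<Longrightarrow> 0 \<le> f x"
  shows "0 \<le> measure_pmf.expectation M f"
  using assms by (intro integral_nonneg_AE AE_pmfI)

lemma expectation_bind_pmf_finite:
  fixes h :: "'b \<Rightarrow> real"
  assumes "finite (set_pmf p)" "\<And>x. x \<in> set_pmf p \<Longrightarrow> finite (set_pmf (f x))"
  shows "measure_pmf.expectation (bind_pmf p f) h
       = measure_pmf.expectation p (\<lambda>x. measure_pmf.expectation (f x) h)"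
  using assms by (simp add: pmf_expectation_bind[OF assms(1)] integral_measure_pmf[OF assms(1)])

lemma map_fst_state_action_dist:
  "map_pmf fst (state_action_dist p r \<psi> (Suc t)) = map_pmf snd (hist_dist p r \<psi> t)"
  unfolding state_action_dist_def map_pmf_def
  by (simp add: bind_assoc_pmf bind_return_pmf case_prod_unfold)

lemma map_snd_hist_dist_Suc:
  "map_pmf snd (hist_dist p r \<psi> (Suc t))
     = bind_pmf (state_action_dist p r \<psi> (Suc t)) (\<lambda>(s, a). transition p r s a)"
proof -
  have "map_pmf snd (hist_dist p r \<psi> (Suc t))
      = bind_pmf (hist_dist p r \<psi> t) (\<lambda>(h, s). bind_pmf (\<psi> h s) (transition p r s))"
    unfolding hist_dist.simps map_bind_pmf split_beta by (simp add: pmf.map_comp o_def)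
  also have "\<dots> = bind_pmf (state_action_dist p r \<psi> (Suc t)) (\<lambda>(s, a). transition p r s a)"
    unfolding state_action_dist_def
    by (auto simp: bind_assoc_pmf bind_map_pmf split_beta intro!: bind_pmf_cong)
  finally show ?thesis .
qed

lemma set_hist_dist_state: "x \<in> set_pmf (hist_dist p r \<psi> t) \<Longrightarrow> 1 \<le> snd x"
  by (induction t arbitrary: x) (auto simp: transition_def case_prod_unfold)

lemma expectation_transition:
  assumes "0 \<le> succ_prob p r a" "succ_prob p r a \<le> 1"
  shows "measure_pmf.expectation (transition p r s a) f
       = succ_prob p r a * f 1 + (1 - succ_prob p r a) * f (Suc s)"
  using assms by (simp add: transition_def)

lemma finite_set_transition: "finite (set_pmf (transition p r s a))"
  by (simp add: transition_def)

lemma finite_set_policy: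
  assumes "admissible_policy N \<psi>"
  shows "finite (set_pmf (\<psi> h s))"
  using assms finite_subset[of "set_pmf (\<psi> h s)" "actions N"]
  by (simp add: admissible_policy_def actions_def)

lemma finite_set_hist_dist:
  assumes "admissible_policy N \<psi>"
  shows "finite (set_pmf (hist_dist p r \<psi> t))"
proof (induction t)
  case (Suc t)
  then show ?case
    using finite_set_policy[OF assms] finite_set_transition by (auto simp: case_prod_unfold)
qed simp

lemma set_state_action_dist:
  assumes "admissible_policy N \<psi>" "1 \<le> t" "x \<in> set_pmf (state_action_dist p r \<psi> t)"
  shows "1 \<le> fst x" "snd x \<in> actions N"
proof -
  obtain y where y: "y \<in> set_pmf (hist_dist p r \<psi> (t - 1))"
    and x: "fst x = snd y" "snd x \<in> set_pmf (\<psi> (fst y) (snd y))"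
    using assms(3) by (auto simp: state_action_dist_def split_beta)
  show "1 \<le> fst x" using set_hist_dist_state[OF y] x(1) by simp
  show "snd x \<in> actions N" using assms(1) x(2) unfolding admissible_policy_def by blast
qed

lemma finite_set_state_action_dist:
  assumes "admissible_policy N \<psi>"
  shows "finite (set_pmf (state_action_dist p r \<psi> t))"
  using finite_set_hist_dist[OF assms] finite_set_policy[OF assms]
  by (auto simp: state_action_dist_def case_prod_unfold)

lemma expectation_current_state:
  fixes f :: "nat \<Rightarrow> real"
  shows "measure_pmf.expectation (hist_dist p r \<psi> t) (\<lambda>x. f (snd x))
     = measure_pmf.expectation (state_action_dist p r \<psi> (Suc t)) (\<lambda>x. f (fst x))"
  using integral_map_pmf[of fst "state_action_dist p r \<psi> (Suc t)" f]
    integral_map_pmf[of snd "hist_dist p r \<psi> t" f]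
  by (simp add: map_fst_state_action_dist)

lemma set_state_action_dist_det_policy:
  "x \<in> set_pmf (state_action_dist p r (det_policy \<phi>) t) \<Longrightarrow> snd x = \<phi> (fst x)"
  by (auto simp: state_action_dist_def det_policy_def split_beta)

lemma admissible_det_policy: "(\<And>s. \<phi> s \<in> actions N) \<Longrightarrow> admissible_policy N (det_policy \<phi>)"
  by (simp add: admissible_policy_def det_policy_def)


section \<open>The recruitment MDP and average-cost verification\<close>

locale recruitment_mdp =
  fixes N :: nat and p c r :: "nat \<Rightarrow> real" and \<beta> \<epsilon> :: real
  assumes N_pos: "N \<ge> 1"
    and p_range: "\<And>n. n \<in> {1..N} \<Longrightarrow> 0 < p n \<and> p n \<le> 1"
    and c_nonneg: "\<And>n. n \<in> {1..N} \<Longrightarrow> 0 \<le> c n"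
    and r_range: "\<And>n. n \<in> {1..N} \<Longrightarrow> 0 < r n \<and> r n \<le> 1"
    and \<beta>_pos: "0 < \<beta>" and \<beta>_less_1: "\<beta> < 1" and \<epsilon>_pos: "0 < \<epsilon>"
    and inj_succ_prob: "inj_on (succ_prob p r) (actions N)"
begin

abbreviation "Q \<equiv> succ_prob p r"
abbreviation "u \<equiv> imm_cost p c r \<beta> \<epsilon>"
abbreviation "\<kappa> \<equiv> \<beta> * \<epsilon>"

lemma succ_prob_range:
  assumes "a \<in> actions N"
  shows "0 \<le> Q a \<and> Q a \<le> 1"
proof -
  have "0 \<le> 1 - r n * p n \<and> 1 - r n * p n \<le> 1" if "n \<in> a" for n
  proof -
    have "n \<in> {1..N}" using assms that by (auto simp: actions_def)
    then have "0 < p n" "p n \<le> 1" "0 < r n" "r n \<le> 1" using p_range r_range by auto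
    then show ?thesis using mult_mono[of "r n" 1 "p n" 1] by simp
  qed
  then show ?thesis unfolding succ_prob_def by (auto intro: prod_nonneg prod_le_1)
qed

lemma exp_cost_nonneg:
  assumes "a \<in> actions N"
  shows "0 \<le> exp_cost p c a"
  unfolding exp_cost_def
proof (rule sum_nonneg)
  fix n assume "n \<in> a"
  then have "n \<in> {1..N}" using assms by (auto simp: actions_def)
  then show "0 \<le> p n * c n" using p_range[of n] c_nonneg[of n] by simp
qed

sublocale parametric_choice "actions N" Q "\<lambda>a. (1 - \<beta>) * exp_cost p c a"
proof
  show "finite (actions N)" by (simp add: actions_def)
  show "actions N \<noteq> {}" unfolding actions_def by blast
qed (use succ_prob_range inj_succ_prob in auto)

definition age_penalty :: "nat \<Rightarrow> real" where
  "age_penalty s = \<kappa> * (real s ^ 2 + 2 * real s)"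

lemma imm_cost_eq: "u s a = \<kappa> + objective (age_penalty s) a"
  unfolding imm_cost_def objective_def age_penalty_def by (simp add: algebra_simps power2_eq_square)

lemma slope_eq_gamma: "slope b a = (1 - \<beta>) * gamma p c r b a"
  by (simp add: slope_def gamma_def right_diff_distrib[symmetric])

definition bellman_residual :: "real \<Rightarrow> (nat \<Rightarrow> real) \<Rightarrow> nat \<Rightarrow> nat set \<Rightarrow> real" where
  "bellman_residual g h s a = u s a + Q a * h 1 + (1 - Q a) * h (Suc s) - g - h s"

definition expected_cost :: "policy \<Rightarrow> nat \<Rightarrow> real" where
  "expected_cost \<psi> t = measure_pmf.expectation (state_action_dist p r \<psi> t) (\<lambda>(s, a). u s a)"

lemma expectation_next_state:
  assumes "admissible_policy N \<psi>"
  shows "measure_pmf.expectation (hist_dist p r \<psi> (Suc t)) (\<lambda>x. f (snd x))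
       = measure_pmf.expectation (state_action_dist p r \<psi> (Suc t))
           (\<lambda>(s, a). Q a * f 1 + (1 - Q a) * f (Suc s))"
proof -
  have "measure_pmf.expectation (hist_dist p r \<psi> (Suc t)) (\<lambda>x. f (snd x))
      = measure_pmf.expectation (bind_pmf (state_action_dist p r \<psi> (Suc t))
          (\<lambda>(s, a). transition p r s a)) f"
    by (simp only: integral_map_pmf[of snd, symmetric] map_snd_hist_dist_Suc)
  also have "\<dots> = measure_pmf.expectation (state_action_dist p r \<psi> (Suc t))
      (\<lambda>(s, a). measure_pmf.expectation (transition p r s a) f)"
    by (subst expectation_bind_pmf_finite)
      (simp_all add: finite_set_state_action_dist[OF assms] finite_set_transition case_prod_unfold)
  also have "\<dots> = measure_pmf.expectation (state_action_dist p r \<psi> (Suc t))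
      (\<lambda>(s, a). Q a * f 1 + (1 - Q a) * f (Suc s))"
  proof (rule expectation_pmf_cong)
    fix x assume "x \<in> set_pmf (state_action_dist p r \<psi> (Suc t))"
    then have "0 \<le> Q (snd x) \<and> Q (snd x) \<le> 1"
      using set_state_action_dist(2)[OF assms, of "Suc t"] succ_prob_range by simp
    then show "(case x of (s, a) \<Rightarrow> measure_pmf.expectation (transition p r s a) f)
        = (case x of (s, a) \<Rightarrow> Q a * f 1 + (1 - Q a) * f (Suc s))"
      by (simp add: expectation_transition case_prod_unfold)
  qed
  finally show ?thesis .
qed

lemma expected_cost_telescoping:
  assumes adm: "admissible_policy N \<psi>"
  shows "(\<Sum>t=1..T. expected_cost \<psi> t) = real T * g + h 1
           - measure_pmf.expectation (hist_dist p r \<psi> T) (\<lambda>x. h (snd x))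
           + (\<Sum>t=1..T. measure_pmf.expectation (state_action_dist p r \<psi> t)
                (\<lambda>(s, a). bellman_residual g h s a))"
proof (induction T)
  case (Suc T)
  let ?\<sigma> = "state_action_dist p r \<psi> (Suc T)"
  have int: "integrable (measure_pmf ?\<sigma>) f" for f :: "nat \<times> nat set \<Rightarrow> real"
    by (rule integrable_measure_pmf_finite[OF finite_set_state_action_dist[OF adm]])
  have "measure_pmf.expectation ?\<sigma> (\<lambda>(s, a). bellman_residual g h s a)
      = expected_cost \<psi> (Suc T)
        + measure_pmf.expectation ?\<sigma> (\<lambda>(s, a). Q a * h 1 + (1 - Q a) * h (Suc s))
        - g - measure_pmf.expectation ?\<sigma> (\<lambda>x. h (fst x))"
    unfolding bellman_residual_def expected_cost_def case_prod_unfold using int by simp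
  moreover have "real (Suc T) * g = real T * g + g" by (simp add: algebra_simps)
  ultimately show ?case
    using Suc expectation_next_state[OF adm, of T h]
      expectation_current_state[where f = h and \<psi> = \<psi> and t = T]
    by simp
qed simp

lemma avg_cost_eq_limsup:
  "avg_cost p c r \<beta> \<epsilon> \<psi> = limsup (\<lambda>T. ereal (1 / real T * (\<Sum>t=1..T. expected_cost \<psi> t)))"
  by (simp add: avg_cost_def expected_cost_def)

lemma expected_cost_sum_ge:
  assumes adm: "admissible_policy N \<psi>"
    and residual: "\<And>s a. 1 \<le> s \<Longrightarrow> a \<in> actions N \<Longrightarrow> 0 \<le> bellman_residual g h s a"
  shows "real T * g + h 1 - measure_pmf.expectation (hist_dist p r \<psi> T) (\<lambda>x. h (snd x))
           \<le> (\<Sum>t=1..T. expected_cost \<psi> t)"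
proof -
  have "0 \<le> measure_pmf.expectation (state_action_dist p r \<psi> t) (\<lambda>(s, a). bellman_residual g h s a)"
    if t: "t \<in> {1..T}" for t
  proof (rule expectation_pmf_nonneg)
    fix x assume x: "x \<in> set_pmf (state_action_dist p r \<psi> t)"
    have "1 \<le> t" using t by simp
    then have "1 \<le> fst x" "snd x \<in> actions N" using set_state_action_dist[OF adm _ x] by simp_all
    then show "0 \<le> (case x of (s, a) \<Rightarrow> bellman_residual g h s a)"
      using residual by (simp add: case_prod_unfold)
  qed
  then have "0 \<le> (\<Sum>t=1..T. measure_pmf.expectation (state_action_dist p r \<psi> t)
      (\<lambda>(s, a). bellman_residual g h s a))" by (rule sum_nonneg)
  then show ?thesis using expected_cost_telescoping[OF adm, where T = T and g = g and h = h] by simp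
qed

lemma expected_bias_le_expected_cost:
  assumes adm: "admissible_policy N \<psi>" and h1: "h 1 = 0"
    and growth: "\<And>s a. 1 \<le> s \<Longrightarrow> a \<in> actions N \<Longrightarrow> (1 - Q a) * h (Suc s) \<le> C * u s a + D"
  shows "measure_pmf.expectation (hist_dist p r \<psi> (Suc t)) (\<lambda>x. h (snd x))
           \<le> C * expected_cost \<psi> (Suc t) + D"
proof -
  let ?\<sigma> = "state_action_dist p r \<psi> (Suc t)"
  have "measure_pmf.expectation (hist_dist p r \<psi> (Suc t)) (\<lambda>x. h (snd x))
      = measure_pmf.expectation ?\<sigma> (\<lambda>(s, a). Q a * h 1 + (1 - Q a) * h (Suc s))"
    by (rule expectation_next_state[OF adm])
  also have "\<dots> \<le> measure_pmf.expectation ?\<sigma> (\<lambda>(s, a). C * u s a + D)"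
  proof (rule expectation_pmf_mono[OF finite_set_state_action_dist[OF adm]])
    fix x assume x: "x \<in> set_pmf ?\<sigma>"
    have "1 \<le> fst x" "snd x \<in> actions N" using set_state_action_dist[OF adm _ x] by simp_all
    then show "(case x of (s, a) \<Rightarrow> Q a * h 1 + (1 - Q a) * h (Suc s))
        \<le> (case x of (s, a) \<Rightarrow> C * u s a + D)"
      using growth h1 by (simp add: case_prod_unfold)
  qed
  also have "\<dots> = C * expected_cost \<psi> (Suc t) + D"
  proof -
    have "integrable (measure_pmf ?\<sigma>) f" for f :: "nat \<times> nat set \<Rightarrow> real"
      by (rule integrable_measure_pmf_finite[OF finite_set_state_action_dist[OF adm]])
    then show ?thesis by (simp add: expected_cost_def case_prod_unfold)
  qed
  finally show ?thesis .
qed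

lemma avg_cost_ge_of_bellman:
  assumes adm: "admissible_policy N \<psi>"
    and residual: "\<And>s a. 1 \<le> s \<Longrightarrow> a \<in> actions N \<Longrightarrow> 0 \<le> bellman_residual g h s a"
    and h1: "h 1 = 0"
    and growth: "\<And>s a. 1 \<le> s \<Longrightarrow> a \<in> actions N \<Longrightarrow> (1 - Q a) * h (Suc s) \<le> C * u s a + D"
    and C: "0 < C"
  shows "ereal g \<le> avg_cost p c r \<beta> \<epsilon> \<psi>"
  unfolding avg_cost_eq_limsup
proof (rule limsup_average_ge[OF _ _ C])
  show "real T * g - measure_pmf.expectation (hist_dist p r \<psi> T) (\<lambda>x. h (snd x))
      \<le> (\<Sum>t=1..T. expected_cost \<psi> t)" for T
    using expected_cost_sum_ge[OF adm residual, of T] h1 by simp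
  show "measure_pmf.expectation (hist_dist p r \<psi> T) (\<lambda>x. h (snd x))
      \<le> C * expected_cost \<psi> T + D" if "1 \<le> T" for T
    using expected_bias_le_expected_cost[OF adm h1 growth] that by (cases T) auto
qed

lemma avg_cost_le_of_bellman:
  assumes \<phi>: "\<And>s. \<phi> s \<in> actions N"
    and residual: "\<And>s. 1 \<le> s \<Longrightarrow> bellman_residual g h s (\<phi> s) = 0"
    and h1: "h 1 = 0" and h_nonneg: "\<And>s. 1 \<le> s \<Longrightarrow> 0 \<le> h s"
  shows "avg_cost p c r \<beta> \<epsilon> (det_policy \<phi>) \<le> ereal g"
  unfolding avg_cost_eq_limsup
proof (rule limsup_average_le)
  fix T :: nat
  have adm: "admissible_policy N (det_policy \<phi>)" using \<phi> by (rule admissible_det_policy)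
  have "measure_pmf.expectation (state_action_dist p r (det_policy \<phi>) t)
          (\<lambda>(s, a). bellman_residual g h s a) = 0" if t: "t \<in> {1..T}" for t
  proof -
    have "measure_pmf.expectation (state_action_dist p r (det_policy \<phi>) t)
          (\<lambda>(s, a). bellman_residual g h s a)
        = measure_pmf.expectation (state_action_dist p r (det_policy \<phi>) t) (\<lambda>_. 0)"
    proof (rule expectation_pmf_cong)
      fix x assume x: "x \<in> set_pmf (state_action_dist p r (det_policy \<phi>) t)"
      have "1 \<le> t" using t by simp
      then have "1 \<le> fst x" "snd x = \<phi> (fst x)"
        using set_state_action_dist(1)[OF adm _ x] set_state_action_dist_det_policy[OF x] by simp_all
      then show "(case x of (s, a) \<Rightarrow> bellman_residual g h s a) = 0"
        using residual by (simp add: case_prod_unfold)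
    qed
    then show ?thesis by simp
  qed
  moreover have "0 \<le> measure_pmf.expectation (hist_dist p r (det_policy \<phi>) T) (\<lambda>x. h (snd x))"
    using h_nonneg set_hist_dist_state by (intro expectation_pmf_nonneg) auto
  ultimately show "(\<Sum>t=1..T. expected_cost (det_policy \<phi>) t) \<le> real T * g"
    using expected_cost_telescoping[OF adm, where T = T and g = g and h = h] h1 by simp
qed

end


section \<open>A solution of the average-cost optimality equation\<close>

context recruitment_mdp
begin

abbreviation "q \<equiv> Q top_action"

lemma q_pos: "0 < q"
proof -
  have "{1} \<in> actions N" using N_pos by (simp add: actions_def)
  moreover have "0 < Q {1}" using p_range[of 1] r_range[of 1] N_pos by (simp add: succ_prob_def)
  ultimately show ?thesis using Q_le_Q_top_action[of "{1}"] by linarith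
qed

lemma q_le_1: "q \<le> 1"
  using succ_prob_range[OF top_action_in_A] by simp

text \<open>Beyond \<open>horizon\<close> the choice is \<open>top_action\<close>, so the Bellman equation is the
  linear recursion \<open>tail_bias_rec\<close>, solved by a quadratic in the age.\<close>

definition quad_coeff :: real where
  "quad_coeff = (1 - q) * \<kappa> / q"

definition lin_coeff :: real where
  "lin_coeff = 2 * (1 - q) * \<kappa> / q ^ 2"

definition tail_bias :: "real \<Rightarrow> nat \<Rightarrow> real" where
  "tail_bias g s = quad_coeff * real s ^ 2 + lin_coeff * real s
     + (objective (quad_coeff + lin_coeff) top_action + \<kappa> - g) / q"

lemma coeffs_nonneg: "0 \<le> quad_coeff" "0 \<le> lin_coeff"
  using q_pos q_le_1 \<beta>_pos \<epsilon>_pos by (simp_all add: quad_coeff_def lin_coeff_def)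

lemma tail_bias_rec:
  "tail_bias g s = \<kappa> + objective (age_penalty s + tail_bias g (Suc s)) top_action - g"
  using q_pos unfolding tail_bias_def objective_def age_penalty_def quad_coeff_def lin_coeff_def
  by (simp add: field_simps power2_eq_square)

lemma tail_bias_gain_shift: "tail_bias g' s = tail_bias g s - (g' - g) / q"
  by (simp add: tail_bias_def diff_divide_distrib)

lemma tail_bias_mono: "s \<le> t \<Longrightarrow> tail_bias g s \<le> tail_bias g t"
  using coeffs_nonneg unfolding tail_bias_def
  by (intro add_mono mult_left_mono power_mono) simp_all

definition horizon :: nat where
  "horizon = nat \<lceil>saturation / \<kappa>\<rceil> + 1"

lemma saturation_le_age_penalty:
  assumes "horizon \<le> s"
  shows "saturation \<le> age_penalty s"
proof -
  have "saturation / \<kappa> \<le> real s" using assms unfolding horizon_def by linarith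
  then have "saturation \<le> \<kappa> * real s" using \<beta>_pos \<epsilon>_pos by (simp add: divide_le_eq mult.commute)
  also have "\<dots> \<le> age_penalty s"
    using \<beta>_pos \<epsilon>_pos by (simp add: age_penalty_def mult_left_mono power2_eq_square)
  finally show ?thesis .
qed

text \<open>\<open>bias_of g\<close> is the candidate bias for the gain \<open>g\<close>: the quadratic tail, continued
  backwards by the Bellman equation.  It decreases at least as fast as \<open>g\<close> increases and is
  Lipschitz in \<open>g\<close>, so the normalisation \<open>bias_of g 1 = 0\<close> can be met.\<close>

primrec backward_bias :: "real \<Rightarrow> nat \<Rightarrow> real" where
  "backward_bias g 0 = tail_bias g horizon"
| "backward_bias g (Suc j) = \<kappa> + min_value (age_penalty (horizon - Suc j) + backward_bias g j) - g"

definition bias_of :: "real \<Rightarrow> nat \<Rightarrow> real" where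
  "bias_of g s = (if horizon \<le> s then tail_bias g s else backward_bias g (horizon - s))"

lemma bias_of_eq_backward: "s \<le> horizon \<Longrightarrow> bias_of g s = backward_bias g (horizon - s)"
  by (cases "s = horizon") (simp_all add: bias_of_def)

lemma backward_bias_le_tail: "j < horizon \<Longrightarrow> backward_bias g j \<le> tail_bias g (horizon - j)"
proof (induction j)
  case (Suc j)
  let ?s = "horizon - Suc j"
  have "backward_bias g (Suc j) \<le> \<kappa> + objective (age_penalty ?s + backward_bias g j) top_action - g"
    using min_value_le[OF top_action_in_A] by simp
  also have "\<dots> \<le> \<kappa> + objective (age_penalty ?s + tail_bias g (Suc ?s)) top_action - g"
    using Suc by (simp add: Suc_diff_Suc objective_mono[OF top_action_in_A])
  also have "\<dots> = tail_bias g ?s" by (rule tail_bias_rec[symmetric])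
  finally show ?case .
qed simp

lemma backward_bias_gain_antimono: "g \<le> g' \<Longrightarrow> backward_bias g' j \<le> backward_bias g j - (g' - g)"
proof (induction j)
  case 0
  have "g' - g \<le> (g' - g) / q" using 0 q_pos q_le_1 by (simp add: le_divide_eq mult_left_le)
  then show ?case by (simp add: tail_bias_gain_shift[of g' _ g])
next
  case (Suc j)
  then show ?case using min_value_mono[of "age_penalty (horizon - Suc j) + backward_bias g' j"] by simp
qed

lemma bias_of_gain_antimono: "g \<le> g' \<Longrightarrow> bias_of g' s \<le> bias_of g s - (g' - g)"
proof -
  assume "g \<le> g'"
  moreover have "g' - g \<le> (g' - g) / q" using \<open>g \<le> g'\<close> q_pos q_le_1 by (simp add: le_divide_eq mult_left_le)
  ultimately show ?thesis
    using backward_bias_gain_antimono[of g g'] by (simp add: bias_of_def tail_bias_gain_shift[of g' _ g])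
qed

lemma backward_bias_lipschitz: "\<bar>backward_bias g j - backward_bias g' j\<bar> \<le> (real j + 1 / q) * \<bar>g - g'\<bar>"
proof (induction j)
  case 0
  then show ?case using q_pos by (simp add: tail_bias_gain_shift[of g' _ g] abs_minus_commute)
next
  case (Suc j)
  let ?x = "age_penalty (horizon - Suc j)"
  have "\<bar>backward_bias g (Suc j) - backward_bias g' (Suc j)\<bar>
      \<le> \<bar>min_value (?x + backward_bias g j) - min_value (?x + backward_bias g' j)\<bar> + \<bar>g - g'\<bar>"
    by simp
  also have "\<dots> \<le> \<bar>backward_bias g j - backward_bias g' j\<bar> + \<bar>g - g'\<bar>"
    using min_value_lipschitz[of "?x + backward_bias g j" "?x + backward_bias g' j"] by simp
  also have "\<dots> \<le> (real (Suc j) + 1 / q) * \<bar>g - g'\<bar>" using Suc by (simp add: algebra_simps)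
  finally show ?case .
qed

lemma bias_of_lipschitz: "\<bar>bias_of g s - bias_of g' s\<bar> \<le> (real horizon + 1 / q) * \<bar>g - g'\<bar>"
proof (cases "horizon \<le> s")
  case True
  have "(real horizon + 1 / q) * \<bar>g - g'\<bar> = real horizon * \<bar>g - g'\<bar> + \<bar>g - g'\<bar> / q"
    by (simp add: distrib_right)
  moreover have "\<bar>bias_of g s - bias_of g' s\<bar> = \<bar>g - g'\<bar> / q"
    using True q_pos by (simp add: bias_of_def tail_bias_gain_shift[of g' _ g] abs_minus_commute)
  ultimately show ?thesis by simp
next
  case False
  have "(real (horizon - s) + 1 / q) * \<bar>g - g'\<bar> \<le> (real horizon + 1 / q) * \<bar>g - g'\<bar>"
    by (intro mult_right_mono) auto
  then show ?thesis using False backward_bias_lipschitz[of g "horizon - s" g'] by (simp add: bias_of_def)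
qed

lemma ex_gain: "\<exists>g. bias_of g 1 = 0"
proof -
  define a where "a = min 0 (bias_of 0 1)"
  define b where "b = max 0 (bias_of 0 1)"
  have "bias_of b 1 \<le> 0" using bias_of_gain_antimono[of 0 b 1] by (simp add: b_def)
  moreover have "0 \<le> bias_of a 1" using bias_of_gain_antimono[of a 0 1] by (simp add: a_def)
  moreover have "continuous_on {a..b} (\<lambda>g. bias_of g 1)"
  proof (rule lipschitz_on_continuous_on)
    show "(real horizon + 1 / q)-lipschitz_on {a..b} (\<lambda>g. bias_of g 1)"
      unfolding lipschitz_on_def dist_real_def using bias_of_lipschitz q_pos by auto
  qed
  ultimately show ?thesis using IVT2'[of "\<lambda>g. bias_of g 1" b 0 a] by (force simp: a_def b_def)
qed

definition gain :: real where
  "gain = (SOME g. bias_of g 1 = 0)"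

definition bias :: "nat \<Rightarrow> real" where
  "bias = bias_of gain"

definition failure_cost :: "nat \<Rightarrow> real" where
  "failure_cost s = age_penalty s + bias (Suc s)"

lemma bias_one: "bias 1 = 0"
  unfolding bias_def gain_def using ex_gain by (rule someI_ex)

lemma tail_bias_gain_nonneg:
  assumes "1 \<le> s"
  shows "0 \<le> tail_bias gain s"
proof -
  have "0 \<le> tail_bias gain 1"
    using bias_one backward_bias_le_tail[of "horizon - 1" gain] bias_of_eq_backward[of 1 gain]
    by (cases "horizon \<le> 1") (simp_all add: bias_def bias_of_def)
  also have "\<dots> \<le> tail_bias gain s" using assms by (rule tail_bias_mono)
  finally show ?thesis .
qed

lemma bias_bellman:
  assumes "1 \<le> s"
  shows "bias s = \<kappa> + min_value (failure_cost s) - gain"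
proof (cases "horizon \<le> s")
  case True
  have "0 \<le> bias (Suc s)" using True tail_bias_gain_nonneg[of "Suc s"] by (simp add: bias_def bias_of_def)
  then have "saturation \<le> failure_cost s"
    using saturation_le_age_penalty[OF True] by (simp add: failure_cost_def)
  then have "min_value (failure_cost s) = objective (failure_cost s) top_action"
    by (simp add: min_value_def choice_eq_top_action)
  then show ?thesis
    using True tail_bias_rec[of gain s] by (simp add: bias_def bias_of_def failure_cost_def)
next
  case False
  then obtain j where j: "horizon - s = Suc j" by (metis Suc_diff_Suc not_le)
  then have "horizon - Suc j = s" "horizon - Suc s = j" using False by simp_all
  then show ?thesis
    using False j bias_of_eq_backward[of "Suc s" gain] by (simp add: bias_def bias_of_def failure_cost_def)
qed

lemma bias_mono_Suc: "1 \<le> s \<Longrightarrow> bias s \<le> bias (Suc s)"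
proof (induction "horizon - s" arbitrary: s rule: less_induct)
  case less
  show ?case
  proof (cases "horizon \<le> s")
    case True
    then show ?thesis using tail_bias_mono[of s "Suc s" gain] by (simp add: bias_def bias_of_def)
  next
    case False
    then have "bias (Suc s) \<le> bias (Suc (Suc s))" using less.hyps[of "Suc s"] by simp
    moreover have "age_penalty s \<le> age_penalty (Suc s)"
      unfolding age_penalty_def using \<beta>_pos \<epsilon>_pos
      by (intro mult_left_mono) (simp_all add: power2_eq_square algebra_simps)
    ultimately have "failure_cost s \<le> failure_cost (Suc s)" by (simp add: failure_cost_def)
    then show ?thesis
      using bias_bellman[OF less.prems] bias_bellman[of "Suc s"] min_value_mono by simp
  qed
qed

lemma bias_mono:
  assumes "1 \<le> s" "s \<le> t"
  shows "bias s \<le> bias t"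
  using assms(2)
proof (induction t rule: dec_induct)
  case (step t)
  then show ?case using bias_mono_Suc[of t] assms(1) by simp
qed simp

lemma bias_nonneg: "1 \<le> s \<Longrightarrow> 0 \<le> bias s"
  using bias_mono[of 1 s] bias_one by simp

lemma failure_cost_mono: "1 \<le> s \<Longrightarrow> s \<le> t \<Longrightarrow> failure_cost s \<le> failure_cost t"
  unfolding failure_cost_def age_penalty_def using bias_mono[of "Suc s" "Suc t"] \<beta>_pos \<epsilon>_pos
  by (intro add_mono mult_left_mono) (simp_all add: power_mono)

lemma failure_cost_ge: "1 \<le> s \<Longrightarrow> \<kappa> * real s \<le> failure_cost s"
  unfolding failure_cost_def age_penalty_def using bias_nonneg[of "Suc s"] \<beta>_pos \<epsilon>_pos
  by (simp add: add_increasing2 power2_eq_square)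

lemma bellman_residual_bias:
  assumes "1 \<le> s"
  shows "bellman_residual gain bias s a = objective (failure_cost s) a - min_value (failure_cost s)"
  using bias_bellman[OF assms] bias_one
  unfolding bellman_residual_def imm_cost_eq objective_def failure_cost_def by (simp add: algebra_simps)

lemma bias_quadratic_bound:
  obtains C D where "0 \<le> C" "\<And>s. bias s \<le> C * real s ^ 2 + D"
proof
  define D0 where "D0 = (objective (quad_coeff + lin_coeff) top_action + \<kappa> - gain) / q"
  show "0 \<le> quad_coeff + lin_coeff" using coeffs_nonneg by simp
  show "bias s \<le> (quad_coeff + lin_coeff) * real s ^ 2 + (\<bar>D0\<bar> + (\<Sum>i<horizon. \<bar>bias i\<bar>))" for s
  proof (cases "horizon \<le> s")
    case True
    then have "real s \<le> real s ^ 2" by (simp add: power2_eq_square horizon_def)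
    then have "lin_coeff * real s \<le> lin_coeff * real s ^ 2" using coeffs_nonneg by (intro mult_left_mono)
    moreover have "0 \<le> (\<Sum>i<horizon. \<bar>bias i\<bar>)" by (simp add: sum_nonneg)
    moreover have "bias s = quad_coeff * real s ^ 2 + lin_coeff * real s + D0"
      using True by (simp add: bias_def bias_of_def tail_bias_def D0_def)
    moreover have "(quad_coeff + lin_coeff) * real s ^ 2 = quad_coeff * real s ^ 2 + lin_coeff * real s ^ 2"
      by (simp add: distrib_right)
    ultimately show ?thesis using abs_ge_self[of D0] by linarith
  next
    case False
    then have "bias s \<le> (\<Sum>i<horizon. \<bar>bias i\<bar>)"
      using member_le_sum[of s "{..<horizon}" "\<lambda>i. \<bar>bias i\<bar>"] by simp
    then show ?thesis using coeffs_nonneg by (simp add: add_increasing)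
  qed
qed

lemma imm_cost_ge:
  assumes a: "a \<in> actions N"
  shows "\<kappa> * ((1 - Q a) * real (Suc s) ^ 2) \<le> u s a"
proof -
  have Qa: "0 \<le> Q a" "Q a \<le> 1" using succ_prob_range[OF a] by auto
  have "\<kappa> * ((1 - Q a) * real (Suc s) ^ 2) = \<kappa> * (1 - Q a) + (1 - Q a) * age_penalty s"
    by (simp add: age_penalty_def power2_eq_square algebra_simps)
  also have "\<dots> \<le> \<kappa> + ((1 - \<beta>) * exp_cost p c a + (1 - Q a) * age_penalty s)"
  proof -
    have "\<kappa> * (1 - Q a) \<le> \<kappa>" using Qa \<beta>_pos \<epsilon>_pos by (simp add: mult_left_le)
    moreover have "0 \<le> (1 - \<beta>) * exp_cost p c a" using \<beta>_less_1 exp_cost_nonneg[OF a] by simp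
    ultimately show ?thesis by linarith
  qed
  also have "\<dots> = u s a" by (simp add: imm_cost_eq objective_def)
  finally show ?thesis .
qed

lemma bias_growth:
  obtains C D where "0 < C"
    "\<And>s a. a \<in> actions N \<Longrightarrow> (1 - Q a) * bias (Suc s) \<le> C * u s a + D"
proof -
  obtain C D where C: "0 \<le> C" and bound: "\<And>s. bias s \<le> C * real s ^ 2 + D"
    using bias_quadratic_bound by metis
  have "(1 - Q a) * bias (Suc s) \<le> (C / \<kappa> + 1) * u s a + \<bar>D\<bar>" if a: "a \<in> actions N" for s a
  proof -
    have Qa: "0 \<le> 1 - Q a" "1 - Q a \<le> 1" using succ_prob_range[OF a] by auto
    have "(1 - Q a) * bias (Suc s) \<le> (1 - Q a) * (C * real (Suc s) ^ 2 + \<bar>D\<bar>)"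
      using bound[of "Suc s"] Qa by (intro mult_left_mono) auto
    also have "\<dots> \<le> C / \<kappa> * (\<kappa> * ((1 - Q a) * real (Suc s) ^ 2)) + \<bar>D\<bar>"
      using Qa \<beta>_pos \<epsilon>_pos by (simp add: algebra_simps mult_left_le_one_le)
    also have "\<dots> \<le> C / \<kappa> * u s a + \<bar>D\<bar>"
      using imm_cost_ge[OF a, of s] C \<beta>_pos \<epsilon>_pos by (intro add_right_mono mult_left_mono) simp_all
    also have "\<dots> \<le> (C / \<kappa> + 1) * u s a + \<bar>D\<bar>"
    proof -
      have "0 \<le> \<kappa> * ((1 - Q a) * real (Suc s) ^ 2)" using Qa \<beta>_pos \<epsilon>_pos by simp
      then have "0 \<le> u s a" using imm_cost_ge[OF a, of s] by linarith
      then show ?thesis by (simp add: distrib_right)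
    qed
    finally show ?thesis .
  qed
  moreover have "0 < C / \<kappa> + 1"
    using C \<beta>_pos \<epsilon>_pos by (simp add: add_nonneg_pos)
  ultimately show ?thesis using that by blast
qed

end


section \<open>An optimal threshold policy\<close>

context recruitment_mdp
begin

definition opt_policy :: "nat \<Rightarrow> nat set" where
  "opt_policy s = choice (failure_cost s)"

lemma optimal_opt_policy: "optimal_policy N p c r \<beta> \<epsilon> (det_policy opt_policy)"
  unfolding optimal_policy_def
proof (intro conjI allI impI)
  show "admissible_policy N (det_policy opt_policy)"
    by (rule admissible_det_policy) (simp add: opt_policy_def choice_in_A)
  fix \<psi> assume adm: "admissible_policy N \<psi>"
  obtain C D where C: "0 < C"
    and growth: "\<And>s a. a \<in> actions N \<Longrightarrow> (1 - Q a) * bias (Suc s) \<le> C * u s a + D"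
    by (rule bias_growth) blast
  have "avg_cost p c r \<beta> \<epsilon> (det_policy opt_policy) \<le> ereal gain"
  proof (rule avg_cost_le_of_bellman[where h = bias])
    show "bellman_residual gain bias s (opt_policy s) = 0" if "1 \<le> s" for s
      using that by (simp add: bellman_residual_bias opt_policy_def min_value_def)
  qed (use bias_one in \<open>simp_all add: opt_policy_def choice_in_A bias_nonneg\<close>)
  also have "ereal gain \<le> avg_cost p c r \<beta> \<epsilon> \<psi>"
  proof (rule avg_cost_ge_of_bellman[where h = bias, OF adm _ bias_one _ C])
    show "0 \<le> bellman_residual gain bias s a" if "1 \<le> s" "a \<in> actions N" for s a
      using that by (simp add: bellman_residual_bias min_value_le)
    show "(1 - Q a) * bias (Suc s) \<le> C * u s a + D" if "1 \<le> s" "a \<in> actions N" for s a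
      using that(2) by (rule growth)
  qed
  finally show "avg_cost p c r \<beta> \<epsilon> (det_policy opt_policy) \<le> avg_cost p c r \<beta> \<epsilon> \<psi>" .
qed

text \<open>The action order lists every choice on the ray above \<open>failure_cost 1\<close>, including choices
  made at no integral age; consecutive thresholds then coincide.  Without these, the
  minimal-slope property of successors could fail.\<close>

definition chosen_actions :: "nat set set" where
  "chosen_actions = choice ` {failure_cost 1..}"

lemma opt_policy_in_chosen_actions: "1 \<le> s \<Longrightarrow> opt_policy s \<in> chosen_actions"
  using failure_cost_mono[of 1 s] by (simp add: opt_policy_def chosen_actions_def)

lemma opt_policy_mono: "1 \<le> s \<Longrightarrow> s \<le> t \<Longrightarrow> Q (opt_policy s) \<le> Q (opt_policy t)"
  unfolding opt_policy_def by (intro choice_mono failure_cost_mono)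

lemma opt_policy_reaches:
  assumes "a \<in> chosen_actions"
  shows "\<exists>s\<ge>1. Q a \<le> Q (opt_policy s)"
proof -
  obtain w where w: "failure_cost 1 \<le> w" "a = choice w" using assms by (auto simp: chosen_actions_def)
  define s where "s = nat \<lceil>w / \<kappa>\<rceil> + 1"
  have "w / \<kappa> \<le> real s" unfolding s_def by linarith
  then have "w \<le> \<kappa> * real s" using \<beta>_pos \<epsilon>_pos by (simp add: divide_le_eq mult.commute)
  also have "\<dots> \<le> failure_cost s" using failure_cost_ge[of s] by (simp add: s_def)
  finally have "Q a \<le> Q (opt_policy s)" unfolding opt_policy_def w(2) by (rule choice_mono)
  then show ?thesis by (intro exI[of _ s]) (simp add: s_def)
qed

lemma chosen_action_successor_min_gamma:
  assumes b: "b \<in> chosen_actions" and b': "b' \<in> chosen_actions" and up: "Q b < Q b'"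
    and gap: "\<And>x. x \<in> chosen_actions \<Longrightarrow> \<not> (Q b < Q x \<and> Q x < Q b')"
    and a: "a \<in> actions N" "Q b < Q a"
  shows "gamma p c r b b' \<le> gamma p c r b a"
proof -
  obtain w w' where w: "failure_cost 1 \<le> w" "b = choice w"
    and w': "failure_cost 1 \<le> w'" "b' = choice w'"
    using b b' by (auto simp: chosen_actions_def)
  have "\<not> (Q (choice w) < Q (choice v) \<and> Q (choice v) < Q (choice w'))"
    if "failure_cost 1 \<le> v" for v
    using gap[of "choice v"] that w(2) w'(2) by (simp add: chosen_actions_def)
  then have "slope b b' \<le> slope b a"
    using choice_successor_min_slope[OF w(1) w'(1)] up a w(2) w'(2) by simp
  then show ?thesis using \<beta>_less_1 by (simp add: slope_eq_gamma)
qed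

lemma opt_policy_threshold:
  "\<exists>K b th. threshold_policy N opt_policy K b th \<and>
     (\<forall>k. 1 \<le> k \<and> k < K \<longrightarrow> Q (b (Suc k)) > Q (b k) \<and>
        (\<forall>a\<in>actions N. Q a > Q (b k) \<longrightarrow> gamma p c r (b k) (b (Suc k)) \<le> gamma p c r (b k) a))"
proof -
  have sub: "chosen_actions \<subseteq> actions N" by (auto simp: chosen_actions_def choice_in_A)
  have "choice (failure_cost 1) \<in> chosen_actions" by (simp add: chosen_actions_def)
  then have nonempty: "chosen_actions \<noteq> {}" by auto
  obtain K :: nat and b where K: "1 \<le> K" and range: "b ` {1..K} = chosen_actions"
    and order: "\<And>j k. j \<in> {1..K} \<Longrightarrow> k \<in> {1..K} \<Longrightarrow> Q (b j) < Q (b k) \<longleftrightarrow> j < k"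
    by (rule enumerate_increasing[OF finite_subset[OF sub finite_A] nonempty inj_on_subset[OF inj_Q sub]])
      blast
  have "threshold_policy N opt_policy K b
      (\<lambda>k. if k = 0 then 1 else LEAST s. 1 \<le> s \<and> Q (b k) < Q (opt_policy s))"
  proof (rule threshold_policy_of_monotone[OF K _ order])
    show "b ` {1..K} \<subseteq> actions N" using range sub by simp
    show "opt_policy s \<in> b ` {1..K}" if "1 \<le> s" for s
      using opt_policy_in_chosen_actions[OF that] range by simp
    show "Q (opt_policy s) \<le> Q (opt_policy t)" if "1 \<le> s" "s \<le> t" for s t
      using that by (rule opt_policy_mono)
    show "\<exists>s\<ge>1. Q (b k) < Q (opt_policy s)" if "1 \<le> k" "k < K" for k
    proof -
      have "b K \<in> chosen_actions" using range K by auto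
      then obtain s where "1 \<le> s" "Q (b K) \<le> Q (opt_policy s)" using opt_policy_reaches by blast
      moreover have "Q (b k) < Q (b K)" using order[of k K] that K by simp
      ultimately show ?thesis by (intro exI[of _ s]) simp
    qed
  qed
  moreover have "Q (b (Suc k)) > Q (b k) \<and>
      (\<forall>a\<in>actions N. Q a > Q (b k) \<longrightarrow> gamma p c r (b k) (b (Suc k)) \<le> gamma p c r (b k) a)"
    if k: "1 \<le> k" "k < K" for k
  proof (intro conjI ballI impI)
    show up: "Q (b k) < Q (b (Suc k))" using order[of k "Suc k"] k by simp
    have gap: "\<not> (Q (b k) < Q x \<and> Q x < Q (b (Suc k)))" if x: "x \<in> chosen_actions" for x
    proof -
      have "x \<in> b ` {1..K}" using x range by simp
      then obtain j where "j \<in> {1..K}" "x = b j" by auto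
      then show ?thesis using order[of k j] order[of j "Suc k"] k by auto
    qed
    show "gamma p c r (b k) (b (Suc k)) \<le> gamma p c r (b k) a" if "a \<in> actions N" "Q (b k) < Q a" for a
      using range k by (intro chosen_action_successor_min_gamma[OF _ _ up gap that]) auto
  qed
  ultimately show ?thesis by blast
qed

end

theorem proposition2:
  fixes N :: nat and p c r :: "nat \<Rightarrow> real" and \<beta> \<epsilon> :: real
  assumes "N \<ge> 1"
    and "\<And>n. n \<in> {1..N} \<Longrightarrow> 0 < p n \<and> p n \<le> 1"
    and "\<And>n. n \<in> {1..N} \<Longrightarrow> 0 \<le> c n"
    and "\<And>n. n \<in> {1..N} \<Longrightarrow> 0 < r n \<and> r n \<le> 1"
    and "0 < \<beta>" and "\<beta> < 1" and "0 < \<epsilon>"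
    and distinct: "inj_on (succ_prob p r) (actions N)"
  shows "\<exists>\<phi> K b th.
           threshold_policy N \<phi> K b th \<and>
           optimal_policy N p c r \<beta> \<epsilon> (det_policy \<phi>) \<and>
           (\<forall>k. 1 \<le> k \<and> k < K \<longrightarrow>
              succ_prob p r (b (Suc k)) > succ_prob p r (b k) \<and>
              (\<forall>a\<in>actions N. succ_prob p r a > succ_prob p r (b k) \<longrightarrow>
                 gamma p c r (b k) (b (Suc k)) \<le> gamma p c r (b k) a))"
proof -
  interpret recruitment_mdp N p c r \<beta> \<epsilon> using assms by unfold_locales auto
  show ?thesis using opt_policy_threshold optimal_opt_policy by blast
qed

end
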